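(* Let $\beta=(\beta_n)_{n\ge0}$ be a sequence of positive numbers with $\liminf_n\beta_n^{1/n}\ge1$. The following are equivalent: 1) every symbol $\phi$ with $\phi(0)=0$ induces a bounded composition operator $C_\phi$ on $H^2(\beta)$, and $\sup\{\|C_\phi\|:\phi \text{ symbol},\ \phi(0)=0\}<\infty$; 2) $\beta$ is essentially decreasing.
   Context: $H^2(\beta)$ is the Hilbert space of analytic functions $f(z)=\sum_{n\ge0}a_nz^n$ on the unit disk $\mathbb D$ with $\|f\|^2=\sum_{n\ge0}|a_n|^2\beta_n<\infty$. A symbol is a non-constant analytic map $\phi:\mathbb D\to\mathbb D$ and $C_\phi f=f\circ\phi$. $\beta$ is essentially decreasing if there is $C\ge1$ with $\beta_m\le C\beta_n$ for all $m\ge n\ge0$. *)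

theory Defs
  imports "HOL-Complex_Analysis.Complex_Analysis"
begin

definition taylor_coeff :: "(complex \<Rightarrow> complex) \<Rightarrow> nat \<Rightarrow> complex" where
  "taylor_coeff f n = (deriv ^^ n) f 0 / of_nat (fact n)"

definition in_H2 :: "(nat \<Rightarrow> real) \<Rightarrow> (complex \<Rightarrow> complex) \<Rightarrow> bool" where
  "in_H2 \<beta> f \<longleftrightarrow> f holomorphic_on ball 0 1 \<and>
      summable (\<lambda>n. (cmod (taylor_coeff f n))^2 * \<beta> n)"

definition H2_norm :: "(nat \<Rightarrow> real) \<Rightarrow> (complex \<Rightarrow> complex) \<Rightarrow> real" where
  "H2_norm \<beta> f = sqrt (\<Sum>n. (cmod (taylor_coeff f n))^2 * \<beta> n)"

definition symbol :: "(complex \<Rightarrow> complex) \<Rightarrow> bool" where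
  "symbol \<phi> \<longleftrightarrow> \<phi> holomorphic_on ball 0 1 \<and> \<phi> ` ball 0 1 \<subseteq> ball 0 1 \<and>
      \<not> (\<exists>c. \<forall>z\<in>ball 0 1. \<phi> z = c)"

definition bounded_comp_op :: "(nat \<Rightarrow> real) \<Rightarrow> (complex \<Rightarrow> complex) \<Rightarrow> bool" where
  "bounded_comp_op \<beta> \<phi> \<longleftrightarrow>
     (\<forall>f. in_H2 \<beta> f \<longrightarrow> in_H2 \<beta> (f \<circ> \<phi>)) \<and>
     (\<exists>M. \<forall>f. in_H2 \<beta> f \<longrightarrow> H2_norm \<beta> (f \<circ> \<phi>) \<le> M * H2_norm \<beta> f)"

definition comp_op_norm :: "(nat \<Rightarrow> real) \<Rightarrow> (complex \<Rightarrow> complex) \<Rightarrow> real" where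
  "comp_op_norm \<beta> \<phi> = Sup {H2_norm \<beta> (f \<circ> \<phi>) | f. in_H2 \<beta> f \<and> H2_norm \<beta> f \<le> 1}"

definition essentially_decreasing :: "(nat \<Rightarrow> real) \<Rightarrow> bool" where
  "essentially_decreasing \<beta> \<longleftrightarrow> (\<exists>C\<ge>1. \<forall>m n. n \<le> m \<longrightarrow> \<beta> m \<le> C * \<beta> n)"

end

theory Submission
  imports Defs
begin

text \<open>Sufficiency rests on a truncated form of Littlewood's subordination principle: if
  \<open>\<phi>(0) = 0\<close>, the partial sums \<open>\<Sum>\<^sub>k\<^sub><\<^sub>N |b\<^sub>k|\<^sup>2\<close> of the Taylor coefficients of \<open>f \<circ> \<phi>\<close> are dominated by
  those of \<open>f\<close>. Abel summation against the decreasing majorant \<open>sup\<^sub>j\<^sub>\<ge>\<^sub>k \<beta>\<^sub>j \<le> C \<beta>\<^sub>k\<close> turns this into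
  \<open>\<parallel>C\<^sub>\<phi>\<parallel>\<^sup>2 \<le> C\<close>. For necessity, when \<open>1 \<le> n < m\<close> the symbol \<open>\<phi>(z) = z ((1 + z\<^sup>m\<^sup>-\<^sup>n)/2)\<^sup>1\<^sup>/\<^sup>n\<close> maps
  the unit vector \<open>z\<^sup>n/\<surd>\<beta>\<^sub>n\<close> to \<open>(z\<^sup>n + z\<^sup>m)/(2\<surd>\<beta>\<^sub>n)\<close>, whose squared norm \<open>1/4 + \<beta>\<^sub>m/(4\<beta>\<^sub>n)\<close> is
  bounded by the square of the uniform bound on \<open>\<parallel>C\<^sub>\<phi>\<parallel>\<close>.\<close>

lemma cmod_diff_sq: "(cmod (a - b))^2 = (cmod a)^2 - 2 * Re (a * cnj b) + (cmod b)^2"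
  by (simp add: cmod_power2) (simp add: power2_eq_square algebra_simps)

lemma cmod_sq_eq_Re_mult_cnj: "(cmod a)^2 = Re (a * cnj a)"
  by (simp add: cmod_power2) (simp add: power2_eq_square)

lemma taylor_coeff_has_fps_expansion: "f has_fps_expansion F \<Longrightarrow> taylor_coeff f n = fps_nth F n"
  by (simp add: taylor_coeff_def fps_nth_fps_expansion)

lemma taylor_coeff_0 [simp]: "taylor_coeff f 0 = f 0"
  by (simp add: taylor_coeff_def)

lemma taylor_coeff_cong_ball:
  assumes "\<forall>z\<in>ball 0 1. f z = g z"
  shows "taylor_coeff f = taylor_coeff g"
proof
  fix k
  have "eventually (\<lambda>z. f z = g z) (nhds 0)"
    using eventually_nhds_in_open[of "ball (0::complex) 1" 0] assms
    by (auto elim: eventually_mono)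
  then show "taylor_coeff f k = taylor_coeff g k"
    unfolding taylor_coeff_def using higher_deriv_cong_ev[OF _ refl] by simp
qed

lemma taylor_coeff_monomials:
  "taylor_coeff (\<lambda>z. a * z ^ n + b * z ^ m) k = (if k = n then a else 0) + (if k = m then b else 0)"
proof -
  have "(\<lambda>z. a * z ^ n + b * z ^ m) has_fps_expansion fps_const a * fps_X ^ n + fps_const b * fps_X ^ m"
    by (intro has_fps_expansion_add has_fps_expansion_cmult_left has_fps_expansion_fps_X_power)
  then show ?thesis by (simp add: taylor_coeff_has_fps_expansion fps_X_power_nth)
qed

subsection \<open>Taylor coefficients as circle integrals\<close>

definition circle_exp :: "real \<Rightarrow> complex" where
  "circle_exp t = exp (2 * of_real pi * \<i> * of_real t)"

lemma norm_circle_exp [simp]: "norm (circle_exp t) = 1"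
  by (simp add: circle_exp_def norm_exp_eq_Re)

lemma cnj_circle_exp: "cnj (circle_exp t) = inverse (circle_exp t)"
  by (simp add: circle_exp_def exp_cnj exp_minus[symmetric])

lemma continuous_on_circle_exp [continuous_intros]: "continuous_on S circle_exp"
  unfolding circle_exp_def by (intro continuous_intros)

lemma continuous_on_circle_comp:
  assumes "g holomorphic_on ball 0 1" and "0 < r" "r < 1"
  shows "continuous_on {0..1} (\<lambda>t. g (of_real r * circle_exp t))"
proof (rule continuous_on_compose2[OF holomorphic_on_imp_continuous_on[OF assms(1)]])
  show "continuous_on {0..1} (\<lambda>t. of_real r * circle_exp t)" by (intro continuous_intros)
  show "(\<lambda>t. of_real r * circle_exp t) ` {0..1} \<subseteq> ball 0 1"
    using assms(2,3) by (auto simp: norm_mult)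
qed

lemma taylor_coeff_circle_integral:
  assumes hol: "g holomorphic_on ball 0 1" and r: "0 < r" "r < 1"
  shows "((\<lambda>t. g (of_real r * circle_exp t) / circle_exp t ^ k)
           has_integral (of_real r ^ k * taylor_coeff g k)) {0..1}"
proof -
  have "((\<lambda>u. g u / (u - 0) ^ Suc k) has_contour_integral (2 * pi * \<i> / fact k * (deriv ^^ k) g 0))
          (circlepath 0 r)"
  proof (rule Cauchy_has_contour_integral_higher_derivative_circlepath)
    show "continuous_on (cball 0 r) g"
      by (rule continuous_on_subset[OF holomorphic_on_imp_continuous_on[OF hol]]) (use r in auto)
    show "g holomorphic_on ball 0 r"
      by (rule holomorphic_on_subset[OF hol]) (use r in auto)
  qed (use r in auto)
  then have "((\<lambda>t. (2 * pi * \<i> / of_real r ^ k) * (g (of_real r * circle_exp t) / circle_exp t ^ k))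
               has_integral (2 * pi * \<i> / fact k * (deriv ^^ k) g 0)) {0..1}"
    unfolding has_contour_integral_def
    by (rule has_integral_cong[THEN iffD1, rotated])
      (use r in \<open>simp only: vector_derivative_circlepath01 atLeastAtMost_iff,
                 auto simp: circlepath circle_exp_def field_simps power_mult_distrib\<close>)
  from has_integral_mult_right[OF this, of "of_real r ^ k / (2 * pi * \<i>)"] show ?thesis
    using r by (simp add: taylor_coeff_def field_simps)
qed

lemma circle_exp_power_orthonormal:
  "((\<lambda>t. circle_exp t ^ j / circle_exp t ^ k) has_integral (if j = k then 1 else 0)) {0..1}"
proof -
  have "(\<lambda>z::complex. z ^ j) holomorphic_on ball 0 1" by (intro holomorphic_intros)
  from has_integral_mult_right[OF taylor_coeff_circle_integral[OF this, of "1/2" k], of "2 ^ j"]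
  have "((\<lambda>t. circle_exp t ^ j / circle_exp t ^ k)
          has_integral (2 ^ j * (taylor_coeff (\<lambda>z. z ^ j) k) / 2 ^ k)) {0..1}"
    by (simp add: power_mult_distrib field_simps)
  moreover have "taylor_coeff (\<lambda>z. z ^ j) k = (if j = k then 1 else 0)"
    using taylor_coeff_monomials[of 1 j 0 j k] by auto
  ultimately show ?thesis by (cases "j = k") auto
qed

subsection \<open>Bessel's inequality on circles\<close>

definition coeff_poly :: "(nat \<Rightarrow> complex) \<Rightarrow> nat \<Rightarrow> complex \<Rightarrow> complex" where
  "coeff_poly a N z = (\<Sum>j<N. a j * z ^ j)"

lemma coeff_poly_0 [simp]: "coeff_poly a 0 z = 0"
  by (simp add: coeff_poly_def)

lemma coeff_poly_Suc: "coeff_poly a (Suc N) z = a 0 + z * coeff_poly (\<lambda>j. a (Suc j)) N z"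
  unfolding coeff_poly_def sum.lessThan_Suc_shift by (simp add: sum_distrib_left mult_ac)

lemma holomorphic_on_coeff_poly_comp [holomorphic_intros]:
  "\<phi> holomorphic_on S \<Longrightarrow> (\<lambda>z. coeff_poly a N (\<phi> z)) holomorphic_on S"
  unfolding coeff_poly_def by (intro holomorphic_intros)

lemma coeff_poly_has_fps_expansion:
  "coeff_poly a N has_fps_expansion (\<Sum>j<N. fps_const (a j) * fps_X ^ j)"
  unfolding coeff_poly_def[abs_def]
  by (intro has_fps_expansion_sum has_fps_expansion_cmult_left has_fps_expansion_fps_X_power)

lemma has_integral_coeff_poly_circle_sq:
  "((\<lambda>t. coeff_poly c N (circle_exp t) * cnj (coeff_poly c N (circle_exp t)))
     has_integral of_real (\<Sum>k<N. (cmod (c k))^2)) {0..1}"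
proof -
  have "((\<lambda>t. \<Sum>k<N. \<Sum>l<N. (c k * cnj (c l)) * (circle_exp t ^ k / circle_exp t ^ l)) has_integral
          (\<Sum>k<N. \<Sum>l<N. (c k * cnj (c l)) * (if k = l then 1 else 0))) {0..1}"
    by (intro has_integral_sum finite_lessThan has_integral_mult_right circle_exp_power_orthonormal)
  moreover have "coeff_poly c N (circle_exp t) * cnj (coeff_poly c N (circle_exp t))
      = (\<Sum>k<N. \<Sum>l<N. (c k * cnj (c l)) * (circle_exp t ^ k / circle_exp t ^ l))" for t
    by (simp add: coeff_poly_def sum_distrib_left sum_distrib_right cnj_circle_exp
        power_inverse divide_inverse mult_ac) (rule sum.swap)
  moreover have "(\<Sum>k<N. \<Sum>l<N. (c k * cnj (c l)) * (if k = l then 1 else 0))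
      = of_real (\<Sum>k<N. (cmod (c k))^2)"
    by (simp add: if_distrib sum.delta of_real_sum complex_norm_square[symmetric]
        del: of_real_power cong: if_cong)
  ultimately show ?thesis by simp
qed

lemma has_integral_mult_cnj_coeff_poly_circle:
  assumes hol: "g holomorphic_on ball 0 1" and r: "0 < r" "r < 1"
  shows "((\<lambda>t. g (of_real r * circle_exp t) * cnj (coeff_poly c N (circle_exp t)))
           has_integral (\<Sum>k<N. cnj (c k) * (of_real r ^ k * taylor_coeff g k))) {0..1}"
proof -
  have "((\<lambda>t. \<Sum>k<N. cnj (c k) * (g (of_real r * circle_exp t) / circle_exp t ^ k))
          has_integral (\<Sum>k<N. cnj (c k) * (of_real r ^ k * taylor_coeff g k))) {0..1}"
    by (intro has_integral_sum finite_lessThan has_integral_mult_right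
        taylor_coeff_circle_integral[OF hol r])
  moreover have "g (of_real r * circle_exp t) * cnj (coeff_poly c N (circle_exp t))
      = (\<Sum>k<N. cnj (c k) * (g (of_real r * circle_exp t) / circle_exp t ^ k))" for t
    by (simp add: coeff_poly_def sum_distrib_left cnj_circle_exp power_inverse divide_inverse mult_ac)
  ultimately show ?thesis by simp
qed

text \<open>The partial sum \<open>s\<close> of the Taylor series of \<open>g\<close> on the circle of radius \<open>r\<close> is the orthogonal
  projection of \<open>g\<close> onto the span of \<open>1, \<dots>, z\<^sup>N\<^sup>-\<^sup>1\<close>, so
  \<open>\<integral>|g|\<^sup>2 = \<integral>|g - s|\<^sup>2 + \<integral>|s|\<^sup>2 \<ge> \<integral>|s|\<^sup>2\<close>.\<close>

lemma sum_taylor_coeff_sq_le_circle_integral: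
  assumes hol: "g holomorphic_on ball 0 1" and r: "0 < r" "r < 1"
  shows "(\<Sum>k<N. (cmod (taylor_coeff g k))^2 * r^(2*k))
           \<le> integral {0..1} (\<lambda>t. (cmod (g (of_real r * circle_exp t)))^2)"
proof -
  define G where "G t = g (of_real r * circle_exp t)" for t
  define c where "c k = of_real r ^ k * taylor_coeff g k" for k
  define s where "s t = coeff_poly c N (circle_exp t)" for t
  define S where "S = (\<Sum>k<N. (cmod (c k))^2)"
  have S_eq: "S = (\<Sum>k<N. (cmod (taylor_coeff g k))^2 * r^(2*k))"
    unfolding S_def c_def using r
    by (intro sum.cong refl) (simp add: norm_mult norm_power power_mult power_mult_distrib mult.commute)
  have "(\<Sum>k<N. cnj (c k) * (of_real r ^ k * taylor_coeff g k)) = of_real S"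
    unfolding S_def of_real_sum c_def[symmetric]
    by (intro sum.cong refl) (simp add: complex_norm_square mult.commute del: of_real_power)
  with has_integral_mult_cnj_coeff_poly_circle[OF hol r, of c N]
  have Gs: "((\<lambda>t. G t * cnj (s t)) has_integral of_real S) {0..1}"
    unfolding G_def s_def by simp
  have ss: "((\<lambda>t. s t * cnj (s t)) has_integral of_real S) {0..1}"
    unfolding s_def S_def by (rule has_integral_coeff_poly_circle_sq)
  have "continuous_on {0..1} (\<lambda>t. (cmod (G t - s t))^2)"
    unfolding G_def s_def coeff_poly_def
    by (intro continuous_intros continuous_on_circle_comp[OF hol r])
  then obtain J where J: "((\<lambda>t. (cmod (G t - s t))^2) has_integral J) {0..1}"
    using integrable_continuous_interval by blast
  have J_nonneg: "0 \<le> J" by (rule has_integral_nonneg[OF J]) simp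
  have "((\<lambda>t. (cmod (G t - s t))^2 + 2 * Re (G t * cnj (s t)) - Re (s t * cnj (s t)))
          has_integral (J + 2 * S - S)) {0..1}"
    using has_integral_Re[OF Gs] has_integral_Re[OF ss]
    by (intro has_integral_diff has_integral_add J has_integral_mult_right) auto
  moreover have "(cmod (G t - s t))^2 + 2 * Re (G t * cnj (s t)) - Re (s t * cnj (s t)) = (cmod (G t))^2" for t
    by (simp add: cmod_diff_sq cmod_sq_eq_Re_mult_cnj[of "s t"])
  ultimately have "integral {0..1} (\<lambda>t. (cmod (G t))^2) = J + S"
    by (simp add: has_integral_integrable_integral)
  then show ?thesis using J_nonneg S_eq unfolding G_def by simp
qed

subsection \<open>Littlewood subordination for the partial sums of \<open>C\<^sub>\<phi>\<close>\<close>

lemma circle_integral_sq_const_add: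
  assumes hol: "h holomorphic_on ball 0 1" and "h 0 = 0" and r: "0 < r" "r < 1"
  shows "integral {0..1} (\<lambda>t. (cmod (a + h (of_real r * circle_exp t)))^2)
           = (cmod a)^2 + integral {0..1} (\<lambda>t. (cmod (h (of_real r * circle_exp t)))^2)"
proof -
  define H where "H t = h (of_real r * circle_exp t)" for t
  have "((\<lambda>t. Re (cnj a * H t)) has_integral 0) {0..1}"
    using has_integral_Re[OF has_integral_mult_right[OF taylor_coeff_circle_integral[OF hol r, of 0], of "cnj a"]]
    by (simp add: H_def \<open>h 0 = 0\<close>)
  moreover have "continuous_on {0..1} (\<lambda>t. (cmod (H t))^2)"
    unfolding H_def by (intro continuous_intros continuous_on_circle_comp[OF hol r])
  ultimately have "((\<lambda>t. (cmod a)^2 + 2 * Re (cnj a * H t) + (cmod (H t))^2)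
      has_integral ((cmod a)^2 + 2 * 0 + integral {0..1} (\<lambda>t. (cmod (H t))^2))) {0..1}"
    using has_integral_const_real[of "(cmod a)^2" 0 1]
    by (intro has_integral_add has_integral_mult_right integrable_integral
        integrable_continuous_interval) auto
  moreover have "(cmod a)^2 + 2 * Re (cnj a * H t) + (cmod (H t))^2 = (cmod (a + H t))^2" for t
    using cmod_diff_sq[of a "- H t"] by (simp add: algebra_simps)
  ultimately show ?thesis by (simp add: H_def has_integral_integrable_integral)
qed

text \<open>Writing \<open>p = a\<^sub>0 + z q\<close>, the cross term \<open>\<integral> a\<^sub>0 \<phi> (q \<circ> \<phi>)\<close> vanishes by the mean value property
  since \<open>\<phi>(0) = 0\<close>, and \<open>|\<phi>| \<le> 1\<close> lets the induction hypothesis handle \<open>q\<close>.\<close>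

lemma circle_integral_coeff_poly_comp_le:
  assumes hol: "\<phi> holomorphic_on ball 0 1" and into: "\<phi> ` ball 0 1 \<subseteq> ball 0 1" and "\<phi> 0 = 0"
    and r: "0 < r" "r < 1"
  shows "integral {0..1} (\<lambda>t. (cmod (coeff_poly a N (\<phi> (of_real r * circle_exp t))))^2)
           \<le> (\<Sum>j<N. (cmod (a j))^2)"
proof (induction N arbitrary: a)
  case 0
  then show ?case by simp
next
  case (Suc N)
  define q where "q z = coeff_poly (\<lambda>j. a (Suc j)) N (\<phi> z)" for z
  define P where "P t = \<phi> (of_real r * circle_exp t)" for t
  have hol_q: "q holomorphic_on ball 0 1" unfolding q_def[abs_def] by (intro holomorphic_intros hol)
  have "integral {0..1} (\<lambda>t. (cmod (coeff_poly a (Suc N) (P t)))^2)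
      = (cmod (a 0))^2 + integral {0..1} (\<lambda>t. (cmod (P t * q (of_real r * circle_exp t)))^2)"
    unfolding P_def coeff_poly_Suc q_def[symmetric]
    by (rule circle_integral_sq_const_add) (use \<open>\<phi> 0 = 0\<close> r in \<open>auto intro!: holomorphic_intros hol hol_q\<close>)
  also have "\<dots> \<le> (cmod (a 0))^2 + integral {0..1} (\<lambda>t. (cmod (q (of_real r * circle_exp t)))^2)"
  proof (intro add_left_mono integral_le integrable_continuous_interval)
    show "continuous_on {0..1} (\<lambda>t. (cmod (P t * q (of_real r * circle_exp t)))^2)"
      unfolding P_def
      by (intro continuous_intros continuous_on_circle_comp[OF hol r] continuous_on_circle_comp[OF hol_q r])
    show "continuous_on {0..1} (\<lambda>t. (cmod (q (of_real r * circle_exp t)))^2)"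
      by (intro continuous_intros continuous_on_circle_comp[OF hol_q r])
    fix t
    have "P t \<in> ball 0 1" using into r unfolding P_def by (force simp: norm_mult)
    then show "(cmod (P t * q (of_real r * circle_exp t)))^2 \<le> (cmod (q (of_real r * circle_exp t)))^2"
      by (simp add: norm_mult power_mono mult_left_le_one_le)
  qed
  also have "\<dots> \<le> (cmod (a 0))^2 + (\<Sum>j<N. (cmod (a (Suc j)))^2)"
    using Suc.IH[of "\<lambda>j. a (Suc j)"] by (simp add: q_def)
  finally show ?case unfolding P_def sum.lessThan_Suc_shift by simp
qed

lemma taylor_coeff_comp_eq_truncation:
  assumes holf: "f holomorphic_on ball 0 1" and hol: "\<phi> holomorphic_on ball 0 1" and "\<phi> 0 = 0"
    and "k < N"
  shows "taylor_coeff (f \<circ> \<phi>) k = taylor_coeff (coeff_poly (taylor_coeff f) N \<circ> \<phi>) k"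
proof -
  define F where "F = fps_expansion f 0"
  define \<Phi> where "\<Phi> = fps_expansion \<phi> 0"
  define P where "P = (\<Sum>j<N. fps_const (taylor_coeff f j) * fps_X ^ j)"
  have F: "f has_fps_expansion F"
    unfolding F_def by (rule has_fps_expansion_fps_expansion[OF _ _ holf]) auto
  have \<Phi>: "\<phi> has_fps_expansion \<Phi>"
    unfolding \<Phi>_def by (rule has_fps_expansion_fps_expansion[OF _ _ hol]) auto
  have \<Phi>0: "\<Phi> $ 0 = 0" using taylor_coeff_has_fps_expansion[OF \<Phi>, of 0] \<open>\<phi> 0 = 0\<close> by simp
  have "(F oo \<Phi>) $ k = (P oo \<Phi>) $ k"
    unfolding fps_compose_nth
  proof (intro sum.cong refl)
    fix i assume "i \<in> {0..k}"
    with \<open>k < N\<close> show "F $ i * (\<Phi> ^ i $ k) = P $ i * (\<Phi> ^ i $ k)"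
      by (simp add: P_def fps_sum_nth if_distrib taylor_coeff_has_fps_expansion[OF F] cong: if_cong)
  qed
  then show ?thesis
    using taylor_coeff_has_fps_expansion[OF has_fps_expansion_compose[OF F \<Phi> \<Phi>0]]
      taylor_coeff_has_fps_expansion[OF has_fps_expansion_compose[OF coeff_poly_has_fps_expansion \<Phi> \<Phi>0]]
    by (simp add: P_def)
qed

lemma partial_sum_taylor_coeff_comp_le:
  assumes holf: "f holomorphic_on ball 0 1" and hol: "\<phi> holomorphic_on ball 0 1"
    and into: "\<phi> ` ball 0 1 \<subseteq> ball 0 1" and "\<phi> 0 = 0"
  shows "(\<Sum>k<N. (cmod (taylor_coeff (f \<circ> \<phi>) k))^2) \<le> (\<Sum>k<N. (cmod (taylor_coeff f k))^2)"
proof -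
  define p where "p = coeff_poly (taylor_coeff f) N"
  define b where "b k = (cmod (taylor_coeff (f \<circ> \<phi>) k))^2" for k
  have hol_p: "(p \<circ> \<phi>) holomorphic_on ball 0 1"
    unfolding p_def o_def by (intro holomorphic_intros hol)
  have bound: "(\<Sum>k<N. b k * r^(2*k)) \<le> (\<Sum>k<N. (cmod (taylor_coeff f k))^2)" if r: "0 < r" "r < 1" for r
  proof -
    have "(\<Sum>k<N. b k * r^(2*k)) = (\<Sum>k<N. (cmod (taylor_coeff (p \<circ> \<phi>) k))^2 * r^(2*k))"
      unfolding b_def p_def using taylor_coeff_comp_eq_truncation[OF holf hol \<open>\<phi> 0 = 0\<close>] by simp
    also have "\<dots> \<le> integral {0..1} (\<lambda>t. (cmod ((p \<circ> \<phi>) (of_real r * circle_exp t)))^2)"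
      by (rule sum_taylor_coeff_sq_le_circle_integral[OF hol_p r])
    also have "\<dots> \<le> (\<Sum>k<N. (cmod (taylor_coeff f k))^2)"
      unfolding p_def o_def by (rule circle_integral_coeff_poly_comp_le[OF hol into \<open>\<phi> 0 = 0\<close> r])
    finally show ?thesis .
  qed
  have "((\<lambda>r. \<Sum>k<N. b k * r^(2*k)) \<longlongrightarrow> (\<Sum>k<N. b k * 1^(2*k))) (at_left (1::real))"
    by (intro tendsto_intros)
  moreover have "eventually (\<lambda>r. (\<Sum>k<N. b k * r^(2*k)) \<le> (\<Sum>k<N. (cmod (taylor_coeff f k))^2))
                   (at_left (1::real))"
  proof -
    have "eventually (\<lambda>r. r \<in> {0<..<1}) (at_left (1::real))" by (rule eventually_at_left_real) simp
    then show ?thesis by eventually_elim (auto intro: bound)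
  qed
  ultimately have "(\<Sum>k<N. b k * 1^(2*k)) \<le> (\<Sum>k<N. (cmod (taylor_coeff f k))^2)"
    by (rule tendsto_le[OF trivial_limit_at_left_real tendsto_const])
  then show ?thesis by (simp add: b_def)
qed

lemma in_H2_zero: "in_H2 \<beta> (\<lambda>_. 0)" and H2_norm_zero: "H2_norm \<beta> (\<lambda>_. 0) = 0"
  by (simp_all add: in_H2_def H2_norm_def taylor_coeff_def)

lemma H2_norm_monomials:
  fixes a b :: complex
  assumes "n \<noteq> m"
  shows "in_H2 \<beta> (\<lambda>z. a * z ^ n + b * z ^ m)"
    and "H2_norm \<beta> (\<lambda>z. a * z ^ n + b * z ^ m) = sqrt ((cmod a)^2 * \<beta> n + (cmod b)^2 * \<beta> m)"
proof -
  have "(\<lambda>k. (cmod (taylor_coeff (\<lambda>z. a * z ^ n + b * z ^ m) k))^2 * \<beta> k)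
          = (\<lambda>k. (if k = n then (cmod a)^2 * \<beta> n else 0) + (if k = m then (cmod b)^2 * \<beta> m else 0))"
    using assms by (auto simp: taylor_coeff_monomials)
  moreover have "(\<lambda>k. (if k = n then (cmod a)^2 * \<beta> n else 0) + (if k = m then (cmod b)^2 * \<beta> m else 0))
                   sums ((cmod a)^2 * \<beta> n + (cmod b)^2 * \<beta> m)"
    by (intro sums_add sums_single)
  moreover have "(\<lambda>z. a * z ^ n + b * z ^ m) holomorphic_on ball 0 1" by (intro holomorphic_intros)
  ultimately show "in_H2 \<beta> (\<lambda>z. a * z ^ n + b * z ^ m)"
    and "H2_norm \<beta> (\<lambda>z. a * z ^ n + b * z ^ m) = sqrt ((cmod a)^2 * \<beta> n + (cmod b)^2 * \<beta> m)"
    by (auto simp: in_H2_def H2_norm_def sums_iff)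
qed

lemma H2_norm_nonneg: "in_H2 \<beta> f \<Longrightarrow> (\<And>n. 0 \<le> \<beta> n) \<Longrightarrow> 0 \<le> H2_norm \<beta> f"
  by (simp add: H2_norm_def in_H2_def suminf_nonneg)

lemma H2_norm_comp_le_comp_op_norm:
  assumes "\<And>n. 0 \<le> \<beta> n" and "bounded_comp_op \<beta> \<phi>" and "in_H2 \<beta> f" "H2_norm \<beta> f \<le> 1"
  shows "H2_norm \<beta> (f \<circ> \<phi>) \<le> comp_op_norm \<beta> \<phi>"
proof -
  obtain M where M: "\<And>g. in_H2 \<beta> g \<Longrightarrow> H2_norm \<beta> (g \<circ> \<phi>) \<le> M * H2_norm \<beta> g"
    using assms(2) unfolding bounded_comp_op_def by blast
  have bdd: "bdd_above {H2_norm \<beta> (g \<circ> \<phi>) | g. in_H2 \<beta> g \<and> H2_norm \<beta> g \<le> 1}"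
  proof (rule bdd_aboveI[of _ "\<bar>M\<bar>"], clarify)
    fix g assume g: "in_H2 \<beta> g" "H2_norm \<beta> g \<le> 1"
    have "M * H2_norm \<beta> g \<le> \<bar>M\<bar>"
      using g(2) H2_norm_nonneg[OF g(1) assms(1)] abs_ge_self[of M] mult_mono[of M "\<bar>M\<bar>" "H2_norm \<beta> g" 1]
      by simp
    then show "H2_norm \<beta> (g \<circ> \<phi>) \<le> \<bar>M\<bar>" using M[OF g(1)] by simp
  qed
  show ?thesis unfolding comp_op_norm_def by (rule cSup_upper[OF _ bdd]) (use assms(3,4) in blast)
qed

lemma comp_op_norm_le:
  assumes "0 \<le> M" and "\<And>f. in_H2 \<beta> f \<Longrightarrow> H2_norm \<beta> (f \<circ> \<phi>) \<le> M * H2_norm \<beta> f"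
  shows "comp_op_norm \<beta> \<phi> \<le> M"
  unfolding comp_op_norm_def
proof (rule cSup_least)
  show "{H2_norm \<beta> (f \<circ> \<phi>) |f. in_H2 \<beta> f \<and> H2_norm \<beta> f \<le> 1} \<noteq> {}"
    using in_H2_zero[of \<beta>] H2_norm_zero[of \<beta>] by fastforce
next
  fix x assume "x \<in> {H2_norm \<beta> (f \<circ> \<phi>) |f. in_H2 \<beta> f \<and> H2_norm \<beta> f \<le> 1}"
  then obtain f where f: "x = H2_norm \<beta> (f \<circ> \<phi>)" "in_H2 \<beta> f" "H2_norm \<beta> f \<le> 1" by blast
  have "x \<le> M * H2_norm \<beta> f" using assms(2)[OF f(2)] f(1) by simp
  also have "\<dots> \<le> M" using f(3) \<open>0 \<le> M\<close> mult_left_mono[of _ 1 M] by simp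
  finally show "x \<le> M" .
qed

subsection \<open>Boundedness for essentially decreasing weights\<close>

text \<open>Abel summation by parts.\<close>

lemma sum_mult_decseq_mono:
  fixes A B g :: "nat \<Rightarrow> real"
  assumes AB: "\<And>N. (\<Sum>k<N. B k) \<le> (\<Sum>k<N. A k)" and "decseq g" and g_nonneg: "\<And>k. 0 \<le> g k"
  shows "(\<Sum>k<N. B k * g k) \<le> (\<Sum>k<N. A k * g k)"
proof -
  define x where "x k = A k - B k" for k
  have x_nonneg: "0 \<le> (\<Sum>k<N. x k)" for N using AB[of N] by (simp add: x_def sum_subtractf)
  have abel: "g N * (\<Sum>k<N. x k) \<le> (\<Sum>k<N. x k * g k)" for N
  proof (induction N)
    case (Suc N)
    have "g (Suc N) * (\<Sum>k<Suc N. x k) \<le> g N * (\<Sum>k<Suc N. x k)"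
      by (rule mult_right_mono[OF decseq_SucD[OF \<open>decseq g\<close>] x_nonneg])
    also have "\<dots> \<le> (\<Sum>k<Suc N. x k * g k)" using Suc.IH by (simp add: algebra_simps)
    finally show ?case .
  qed simp
  have "0 \<le> g N * (\<Sum>k<N. x k)" using g_nonneg x_nonneg by simp
  with abel[of N] show ?thesis by (simp add: x_def left_diff_distrib sum_subtractf)
qed

lemma essentially_decreasing_majorant:
  fixes \<beta> :: "nat \<Rightarrow> real"
  assumes "\<And>m n. n \<le> m \<Longrightarrow> \<beta> m \<le> C * \<beta> n"
  obtains g where "decseq g" "\<And>k. \<beta> k \<le> g k" "\<And>k. g k \<le> C * \<beta> k"
proof
  define g where "g k = Sup (\<beta> ` {k..})" for k
  have bdd: "bdd_above (\<beta> ` {k..})" for k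
    using assms[of k] by (auto intro!: bdd_aboveI[of _ "C * \<beta> k"])
  show "decseq g"
    unfolding g_def by (rule decseq_SucI, rule cSup_subset_mono) (auto intro: bdd)
  show "\<beta> k \<le> g k" for k unfolding g_def by (rule cSup_upper[OF _ bdd]) auto
  show "g k \<le> C * \<beta> k" for k unfolding g_def by (rule cSup_least) (auto intro: assms)
qed

lemma H2_sum_comp_le:
  assumes pos: "\<And>n. \<beta> n > 0" and C: "\<And>m n. n \<le> m \<Longrightarrow> \<beta> m \<le> C * \<beta> n"
    and holf: "f holomorphic_on ball 0 1" and sf: "summable (\<lambda>n. (cmod (taylor_coeff f n))^2 * \<beta> n)"
    and hol: "\<phi> holomorphic_on ball 0 1" and into: "\<phi> ` ball 0 1 \<subseteq> ball 0 1" and "\<phi> 0 = 0"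
  shows "summable (\<lambda>n. (cmod (taylor_coeff (f \<circ> \<phi>) n))^2 * \<beta> n)"
    and "(\<Sum>n. (cmod (taylor_coeff (f \<circ> \<phi>) n))^2 * \<beta> n) \<le> C * (\<Sum>n. (cmod (taylor_coeff f n))^2 * \<beta> n)"
proof -
  define A where "A k = (cmod (taylor_coeff f k))^2" for k
  define B where "B k = (cmod (taylor_coeff (f \<circ> \<phi>) k))^2" for k
  have "0 \<le> C" using C[of 0 0] pos[of 0] by simp
  obtain g where g: "decseq g" "\<And>k. \<beta> k \<le> g k" "\<And>k. g k \<le> C * \<beta> k"
    by (rule essentially_decreasing_majorant[OF C]) auto
  have g_nonneg: "0 \<le> g k" for k using g(2)[of k] pos[of k] by simp
  have partial: "(\<Sum>k<N. B k * \<beta> k) \<le> C * (\<Sum>n. A n * \<beta> n)" for N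
  proof -
    have "(\<Sum>k<N. B k * \<beta> k) \<le> (\<Sum>k<N. B k * g k)"
      by (intro sum_mono mult_left_mono g) (simp add: B_def)
    also have "\<dots> \<le> (\<Sum>k<N. A k * g k)"
      unfolding A_def B_def
      by (rule sum_mult_decseq_mono[OF partial_sum_taylor_coeff_comp_le[OF holf hol into \<open>\<phi> 0 = 0\<close>]
            g(1) g_nonneg])
    also have "\<dots> \<le> (\<Sum>k<N. A k * (C * \<beta> k))"
      by (intro sum_mono mult_left_mono g(3)) (simp add: A_def)
    also have "\<dots> = C * (\<Sum>k<N. A k * \<beta> k)"
      by (simp add: sum_distrib_left mult_ac)
    also have "\<dots> \<le> C * (\<Sum>n. A n * \<beta> n)"
      using \<open>0 \<le> C\<close> sf pos by (intro mult_left_mono sum_le_suminf) (auto simp: A_def less_imp_le)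
    finally show ?thesis .
  qed
  have "summable (\<lambda>n. B n * \<beta> n)"
  proof (rule bounded_imp_summable)
    show "0 \<le> B n * \<beta> n" for n using pos[of n] by (simp add: B_def)
    show "(\<Sum>k\<le>n. B k * \<beta> k) \<le> C * (\<Sum>n. A n * \<beta> n)" for n
      using partial[of "Suc n"] by (simp add: lessThan_Suc_atMost)
  qed
  then show "summable (\<lambda>n. (cmod (taylor_coeff (f \<circ> \<phi>) n))^2 * \<beta> n)" by (simp add: B_def)
  from suminf_le_const[OF this] partial
  show "(\<Sum>n. (cmod (taylor_coeff (f \<circ> \<phi>) n))^2 * \<beta> n) \<le> C * (\<Sum>n. (cmod (taylor_coeff f n))^2 * \<beta> n)"
    by (simp add: A_def B_def)
qed

lemma H2_comp_norm_le:
  assumes pos: "\<And>n. \<beta> n > 0" and C: "\<And>m n. n \<le> m \<Longrightarrow> \<beta> m \<le> C * \<beta> n"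
    and "symbol \<phi>" "\<phi> 0 = 0" and "in_H2 \<beta> f"
  shows "in_H2 \<beta> (f \<circ> \<phi>)" and "H2_norm \<beta> (f \<circ> \<phi>) \<le> sqrt C * H2_norm \<beta> f"
proof -
  have hol: "\<phi> holomorphic_on ball 0 1" and into: "\<phi> ` ball 0 1 \<subseteq> ball 0 1"
    using \<open>symbol \<phi>\<close> by (auto simp: symbol_def)
  have holf: "f holomorphic_on ball 0 1" and sf: "summable (\<lambda>n. (cmod (taylor_coeff f n))^2 * \<beta> n)"
    using \<open>in_H2 \<beta> f\<close> by (auto simp: in_H2_def)
  note bound = H2_sum_comp_le[of \<beta>, OF pos C holf sf hol into \<open>\<phi> 0 = 0\<close>]
  have "(f \<circ> \<phi>) holomorphic_on ball 0 1" by (rule holomorphic_on_compose_gen[OF hol holf into])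
  with bound(1) show "in_H2 \<beta> (f \<circ> \<phi>)" by (simp add: in_H2_def)
  show "H2_norm \<beta> (f \<circ> \<phi>) \<le> sqrt C * H2_norm \<beta> f"
    unfolding H2_norm_def real_sqrt_mult[symmetric] using bound(2) by simp
qed

lemma comp_op_bounded_if_essentially_decreasing:
  assumes pos: "\<And>n. \<beta> n > 0" and "essentially_decreasing \<beta>"
  shows "(\<forall>\<phi>. symbol \<phi> \<and> \<phi> 0 = 0 \<longrightarrow> bounded_comp_op \<beta> \<phi>) \<and>
         bdd_above {comp_op_norm \<beta> \<phi> | \<phi>. symbol \<phi> \<and> \<phi> 0 = 0}"
proof -
  obtain C where "C \<ge> 1" and C: "\<And>m n. n \<le> m \<Longrightarrow> \<beta> m \<le> C * \<beta> n"
    using assms(2) unfolding essentially_decreasing_def by blast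
  have comp: "in_H2 \<beta> (f \<circ> \<phi>)" "H2_norm \<beta> (f \<circ> \<phi>) \<le> sqrt C * H2_norm \<beta> f"
    if "symbol \<phi>" "\<phi> 0 = 0" "in_H2 \<beta> f" for \<phi> f
    using H2_comp_norm_le[of \<beta> C \<phi> f] pos C that by blast+
  have "bounded_comp_op \<beta> \<phi>" if "symbol \<phi>" "\<phi> 0 = 0" for \<phi>
    unfolding bounded_comp_op_def using comp[OF that] by blast
  moreover have "comp_op_norm \<beta> \<phi> \<le> sqrt C" if "symbol \<phi>" "\<phi> 0 = 0" for \<phi>
    using \<open>C \<ge> 1\<close> comp(2)[OF that] by (intro comp_op_norm_le) simp_all
  then have "bdd_above {comp_op_norm \<beta> \<phi> | \<phi>. symbol \<phi> \<and> \<phi> 0 = 0}"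
    by (intro bdd_aboveI[of _ "sqrt C"]) blast
  ultimately show ?thesis by blast
qed

subsection \<open>Necessity of essential decrease\<close>

text \<open>The symbol is \<open>\<phi>(z) = z ((1 + z\<^sup>d)/2)\<^sup>1\<^sup>/\<^sup>n\<close>, with the principal branch of the root,
  which exists because \<open>Re (1 + z\<^sup>d) > 0\<close> on the disk.\<close>

lemma symbol_with_power_eq:
  assumes "1 \<le> n" and "1 \<le> d"
  obtains \<phi> where "symbol \<phi>" "\<phi> 0 = 0" "\<And>z. z \<in> ball 0 1 \<Longrightarrow> (\<phi> z) ^ n = z ^ n * ((1 + z ^ d) / 2)"
proof -
  define h where "h z = (1 + z ^ d) / 2" for z :: complex
  define u where "u z = exp (Ln (h z) / of_nat n)" for z
  define \<phi> where "\<phi> z = z * u z" for z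
  have norm_zd: "norm (z ^ d) < 1" if "z \<in> ball 0 1" for z :: complex
    using that \<open>1 \<le> d\<close> by (simp add: norm_power power_less_one_iff)
  have Re_h: "0 < Re (h z)" if "z \<in> ball 0 1" for z
    using abs_Re_le_cmod[of "z ^ d"] norm_zd[OF that] by (simp add: h_def)
  have norm_h: "norm (h z) \<le> 1" if "z \<in> ball 0 1" for z
    using norm_triangle_ineq[of 1 "z ^ d"] norm_zd[OF that] by (simp add: h_def)
  have u_power: "u z ^ n = h z" if "z \<in> ball 0 1" for z
  proof -
    have "h z \<noteq> 0" using Re_h[OF that] by auto
    then show ?thesis using \<open>1 \<le> n\<close>
      by (simp add: u_def exp_of_nat_mult[symmetric] del: exp_of_nat_mult)
  qed
  have norm_u: "norm (u z) \<le> 1" if "z \<in> ball 0 1" for z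
  proof -
    have "norm (u z) ^ n \<le> 1" using u_power[OF that] norm_h[OF that] by (simp add: norm_power[symmetric])
    then show ?thesis using \<open>1 \<le> n\<close> by (simp add: power_le_one_iff)
  qed
  have "u holomorphic_on ball 0 1"
    unfolding u_def[abs_def] h_def[abs_def]
    by (intro holomorphic_intros) (use Re_h \<open>1 \<le> n\<close> in \<open>force simp: h_def complex_nonpos_Reals_iff\<close>)+
  then have hol: "\<phi> holomorphic_on ball 0 1" unfolding \<phi>_def[abs_def] by (intro holomorphic_intros)
  have into: "\<phi> ` ball 0 1 \<subseteq> ball 0 1"
  proof clarify
    fix z :: complex assume z: "z \<in> ball 0 1"
    have "norm (\<phi> z) \<le> norm z"
      using norm_u[OF z] mult_left_le[of "cmod (u z)" "cmod z"] by (simp add: \<phi>_def norm_mult)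
    with z show "\<phi> z \<in> ball 0 1" by simp
  qed
  have "\<phi> (1/2) \<noteq> \<phi> 0" by (simp add: \<phi>_def u_def)
  moreover have "(1/2 :: complex) \<in> ball 0 1" "(0 :: complex) \<in> ball 0 1"
    by (simp_all add: norm_divide)
  ultimately have "\<not> (\<exists>c. \<forall>z\<in>ball 0 1. \<phi> z = c)" by metis
  with hol into have symbol: "symbol \<phi>" by (simp add: symbol_def)
  have "(\<phi> z) ^ n = z ^ n * ((1 + z ^ d) / 2)" if "z \<in> ball 0 1" for z
    using u_power[OF that] by (simp add: \<phi>_def power_mult_distrib h_def)
  with symbol show ?thesis using that by (simp add: \<phi>_def)
qed

text \<open>Test \<open>C\<^sub>\<phi>\<close> on \<open>f = z\<^sup>n/\<surd>\<beta>\<^sub>n\<close>, with the symbol of \<open>symbol_with_power_eq\<close> for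
  \<open>d = m - n\<close>: then \<open>f \<circ> \<phi> = (z\<^sup>n + z\<^sup>m)/(2\<surd>\<beta>\<^sub>n)\<close>, of squared norm \<open>1/4 + \<beta>\<^sub>m/(4\<beta>\<^sub>n)\<close>.\<close>

lemma weight_le_comp_op_norm_bound:
  assumes pos: "\<And>n. \<beta> n > 0"
    and bounded: "\<And>\<phi>. symbol \<phi> \<Longrightarrow> \<phi> 0 = 0 \<Longrightarrow> bounded_comp_op \<beta> \<phi>"
    and B: "\<And>\<phi>. symbol \<phi> \<Longrightarrow> \<phi> 0 = 0 \<Longrightarrow> comp_op_norm \<beta> \<phi> \<le> B"
    and "1 \<le> n" "n < m"
  shows "\<beta> m \<le> 4 * B^2 * \<beta> n"
proof -
  have "1 \<le> m - n" using \<open>n < m\<close> by simp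
  obtain \<phi> where \<phi>: "symbol \<phi>" "\<phi> 0 = 0"
    and \<phi>_power: "\<And>z. z \<in> ball 0 1 \<Longrightarrow> (\<phi> z) ^ n = z ^ n * ((1 + z ^ (m - n)) / 2)"
    by (rule symbol_with_power_eq[OF \<open>1 \<le> n\<close> \<open>1 \<le> m - n\<close>]) blast
  define c where "c = complex_of_real (1 / sqrt (\<beta> n))"
  have c_sq: "(cmod c)^2 = 1 / \<beta> n"
    using pos[of n] by (simp add: c_def norm_divide power_divide less_imp_le)
  have "n \<noteq> m" using \<open>n < m\<close> by simp
  define f where "f z = c * z ^ n" for z
  have f_eq: "f = (\<lambda>z. c * z ^ n + 0 * z ^ m)" by (simp add: f_def fun_eq_iff)
  have "in_H2 \<beta> f" unfolding f_eq by (rule H2_norm_monomials(1)[OF \<open>n \<noteq> m\<close>])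
  have "H2_norm \<beta> f = 1"
    unfolding f_eq H2_norm_monomials(2)[OF \<open>n \<noteq> m\<close>] using c_sq pos[of n] by simp
  have "taylor_coeff (f \<circ> \<phi>) = taylor_coeff (\<lambda>z. (c/2) * z ^ n + (c/2) * z ^ m)"
  proof (rule taylor_coeff_cong_ball, intro ballI)
    fix z :: complex assume "z \<in> ball 0 1"
    moreover have "z ^ n * z ^ (m - n) = z ^ m" using \<open>n < m\<close> by (simp add: power_add[symmetric])
    ultimately show "(f \<circ> \<phi>) z = (c/2) * z ^ n + (c/2) * z ^ m"
      by (simp add: f_def \<phi>_power field_simps)
  qed
  then have "H2_norm \<beta> (f \<circ> \<phi>) = H2_norm \<beta> (\<lambda>z. (c/2) * z ^ n + (c/2) * z ^ m)"
    by (simp add: H2_norm_def)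
  also have "\<dots> = sqrt ((cmod (c/2))^2 * \<beta> n + (cmod (c/2))^2 * \<beta> m)"
    by (rule H2_norm_monomials(2)[OF \<open>n \<noteq> m\<close>])
  also have "\<dots> = sqrt (1/4 + \<beta> m / (4 * \<beta> n))"
    using pos[of n] by (simp add: norm_divide power_divide c_sq field_simps)
  finally have "sqrt (1/4 + \<beta> m / (4 * \<beta> n)) \<le> B"
    using H2_norm_comp_le_comp_op_norm[OF less_imp_le[OF pos] bounded[OF \<phi>] \<open>in_H2 \<beta> f\<close>] \<open>H2_norm \<beta> f = 1\<close> B[OF \<phi>]
    by simp
  then have "(sqrt (1/4 + \<beta> m / (4 * \<beta> n)))^2 \<le> B^2"
    by (rule power_mono) (use pos[of m] pos[of n] in \<open>simp add: less_imp_le\<close>)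
  then have "1/4 + \<beta> m / (4 * \<beta> n) \<le> B^2"
    using pos[of m] pos[of n] by (simp add: less_imp_le)
  then have "\<beta> m / (4 * \<beta> n) \<le> B^2" by linarith
  then show ?thesis using pos[of n] by (simp add: pos_divide_le_eq mult_ac)
qed

text \<open>The test functions need \<open>n \<ge> 1\<close>; the weight \<open>\<beta>\<^sub>0\<close> is compared with \<open>\<beta>\<^sub>1\<close> separately.\<close>

lemma essentially_decreasingI_from_one:
  assumes pos: "\<And>n. \<beta> n > 0" and K: "\<And>m n. 1 \<le> n \<Longrightarrow> n < m \<Longrightarrow> \<beta> m \<le> K * \<beta> n"
  shows "essentially_decreasing \<beta>"
proof -
  define K' where "K' = max 1 K"
  define D where "D = max 1 (\<beta> 1 / \<beta> 0)"
  have K': "\<beta> m \<le> K' * \<beta> n" if "1 \<le> n" "n \<le> m" for m n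
  proof (cases "n = m")
    case False
    with K[of n m] that have "\<beta> m \<le> K * \<beta> n" by simp
    also have "\<dots> \<le> K' * \<beta> n" using pos[of n] by (simp add: K'_def)
    finally show ?thesis .
  qed (use pos[of n] in \<open>simp add: K'_def\<close>)
  have "\<beta> 1 / \<beta> 0 \<le> D" by (simp add: D_def)
  with pos[of 0] have D: "\<beta> 1 \<le> D * \<beta> 0" by (simp add: pos_divide_le_eq)
  have K'D: "1 \<le> K' * D" using mult_mono[of 1 K' 1 D] by (simp add: K'_def D_def)
  have "\<beta> m \<le> (K' * D) * \<beta> n" if "n \<le> m" for m n
  proof (cases "n = 0")
    case True
    show ?thesis
    proof (cases "m = 0")
      case False
      then have "\<beta> m \<le> K' * \<beta> 1" using K'[of 1 m] by simp
      also have "\<dots> \<le> K' * (D * \<beta> 0)" by (intro mult_left_mono D) (simp add: K'_def)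
      finally show ?thesis using \<open>n = 0\<close> by (simp add: mult.assoc)
    qed (use \<open>n = 0\<close> mult_right_mono[OF K'D less_imp_le[OF pos[of 0]]] in simp)
  next
    case False
    then have "\<beta> m \<le> K' * \<beta> n" using K' that by simp
    also have "\<dots> \<le> (K' * D) * \<beta> n"
      by (rule mult_right_mono[OF _ less_imp_le[OF pos]])
        (use mult_left_mono[of 1 D K'] in \<open>simp add: K'_def D_def\<close>)
    finally show ?thesis .
  qed
  with K'D show ?thesis unfolding essentially_decreasing_def by blast
qed

lemma essentially_decreasing_if_comp_op_bounded:
  assumes pos: "\<And>n. \<beta> n > 0"
    and "\<forall>\<phi>. symbol \<phi> \<and> \<phi> 0 = 0 \<longrightarrow> bounded_comp_op \<beta> \<phi>"
    and "bdd_above {comp_op_norm \<beta> \<phi> | \<phi>. symbol \<phi> \<and> \<phi> 0 = 0}"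
  shows "essentially_decreasing \<beta>"
proof -
  define B where "B = Sup {comp_op_norm \<beta> \<phi> | \<phi>. symbol \<phi> \<and> \<phi> 0 = 0}"
  have "comp_op_norm \<beta> \<phi> \<le> B" if "symbol \<phi>" "\<phi> 0 = 0" for \<phi>
    unfolding B_def by (rule cSup_upper[OF _ assms(3)]) (use that in blast)
  with assms(2) have "\<beta> m \<le> (4 * B^2) * \<beta> n" if "1 \<le> n" "n < m" for m n
    using weight_le_comp_op_norm_bound[of \<beta>, OF pos _ _ that] by blast
  then show ?thesis by (rule essentially_decreasingI_from_one[of \<beta>, OF pos])
qed

theorem mainTheorem5:
  fixes \<beta> :: "nat \<Rightarrow> real"
  assumes pos: "\<And>n. \<beta> n > 0"
    and liminf: "liminf (\<lambda>n. ereal (root n (\<beta> n))) \<ge> 1"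
  shows "((\<forall>\<phi>. symbol \<phi> \<and> \<phi> 0 = 0 \<longrightarrow> bounded_comp_op \<beta> \<phi>) \<and>
          bdd_above {comp_op_norm \<beta> \<phi> | \<phi>. symbol \<phi> \<and> \<phi> 0 = 0})
         \<longleftrightarrow> essentially_decreasing \<beta>"
proof
  assume "(\<forall>\<phi>. symbol \<phi> \<and> \<phi> 0 = 0 \<longrightarrow> bounded_comp_op \<beta> \<phi>) \<and>
          bdd_above {comp_op_norm \<beta> \<phi> | \<phi>. symbol \<phi> \<and> \<phi> 0 = 0}"
  then show "essentially_decreasing \<beta>"
    using essentially_decreasing_if_comp_op_bounded[of \<beta>, OF pos] by blast
qed (rule comp_op_bounded_if_essentially_decreasing[of \<beta>, OF pos])

end
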